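(* Let $\mathcal{H}$ be a real Hilbert space, $\Gamma\subseteq\mathbb{R}_{++}$ a nonempty closed interval, $A_1:\mathcal{H}\to\mathcal{H}$ maximally monotone and $L$-Lipschitz, and $A_2:\mathcal{H}\rightrightarrows\mathcal{H}$ maximally $\mu$-strongly monotone, with $\mathcal{P}:=\operatorname{zer}(A_1+A_2)\neq\emptyset$. Let $\mathcal{D}:=\operatorname{zer}(A_1^{-1}-A_2^{-1}\circ(-\mathrm{Id}))$, let $(\gamma_n)_{n\in\mathbb{N}}\subseteq\Gamma$ converge $R$-linearly to $\gamma^*\in\Gamma$, and let $T_\gamma:=\mathrm{Id}-J_{\gamma A_1}+J_{\gamma A_2}(2J_{\gamma A_1}-\mathrm{Id})$. Given $x_0\in\mathcal{H}$, set $z_0:=J_{\gamma_0A_1}x_0$ and for $n\in\mathbb{N}$ define $y_n:=J_{\gamma_nA_2}(2z_n-x_n)$, $w_n:=x_n-z_n+y_n$, $z_{n+1}:=J_{\gamma_nA_1}w_n$, $x_{n+1}:=\frac{\gamma_{n+1}}{\gamma_n}w_n+\big(1-\frac{\gamma_{n+1}}{\gamma_n}\big)z_{n+1}$. Then: (i) $(x_n)$ and $(w_n)$ converge $R$-linearly to the same point $x\in\operatorname{Fix}T_{\gamma^*}$; (ii) $(z_n)$ and $(y_n)$ converge $R$-linearly to the same point $z:=J_{\gamma^*A_1}x\in\mathcal{P}$; (iii) $\big(\frac{x_n-z_n}{\gamma_n}\big)$ and $\big(\frac{w_n-y_n}{\gamma_n}\big)$ converge $R$-linearly to $g:=\fr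ac{x-z}{\gamma^*}\in\mathcal{D}$.
   Context: $\operatorname{zer}A=\{x:0\in Ax\}$; $J_A=(\mathrm{Id}+A)^{-1}$; $A^{-1}$ is the inverse operator; $\operatorname{Fix}T=\{x:Tx=x\}$. $A_2$ is $\mu$-strongly monotone if $\langle x-y,u-v\rangle\ge\mu\|x-y\|^2$ for all $(x,u),(y,v)\in\operatorname{gra}A_2$. A sequence $(a_n)$ converges $R$-linearly to $a$ if there exist $C\ge0$, $r\in(0,1)$ with $\|a_n-a\|\le Cr^n$ for all $n$. *)

theory Defs
  imports "HOL-Analysis.Analysis"
begin

text \<open>Set-valued operators on a real Hilbert space are represented by their graphs.\<close>

definition graph_of :: "('a \<Rightarrow> 'a) \<Rightarrow> ('a \<times> 'a) set" where
  "graph_of f = {(x, f x) | x. True}"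

definition monotone_op :: "('a::real_inner \<times> 'a) set \<Rightarrow> bool" where
  "monotone_op G \<longleftrightarrow> (\<forall>(x,u)\<in>G. \<forall>(y,v)\<in>G. 0 \<le> inner (x - y) (u - v))"

definition max_monotone :: "('a::real_inner \<times> 'a) set \<Rightarrow> bool" where
  "max_monotone G \<longleftrightarrow> monotone_op G \<and> (\<forall>G'. monotone_op G' \<and> G \<subseteq> G' \<longrightarrow> G' = G)"

definition strongly_monotone_op :: "real \<Rightarrow> ('a::real_inner \<times> 'a) set \<Rightarrow> bool" where
  "strongly_monotone_op \<mu> G \<longleftrightarrow>
     (\<forall>(x,u)\<in>G. \<forall>(y,v)\<in>G. \<mu> * (norm (x - y))\<^sup>2 \<le> inner (x - y) (u - v))"

definition zer :: "('a::real_vector \<times> 'a) set \<Rightarrow> 'a set" where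
  "zer G = {x. (x, 0) \<in> G}"

definition op_add :: "('a::real_vector \<times> 'a) set \<Rightarrow> ('a \<times> 'a) set \<Rightarrow> ('a \<times> 'a) set" where
  "op_add G H = {(x, u + v) | x u v. (x, u) \<in> G \<and> (x, v) \<in> H}"

definition op_diff :: "('a::real_vector \<times> 'a) set \<Rightarrow> ('a \<times> 'a) set \<Rightarrow> ('a \<times> 'a) set" where
  "op_diff G H = {(x, u - v) | x u v. (x, u) \<in> G \<and> (x, v) \<in> H}"

definition op_inv :: "('a \<times> 'a) set \<Rightarrow> ('a \<times> 'a) set" where
  "op_inv G = {(u, x) | x u. (x, u) \<in> G}"

definition op_comp_neg :: "('a::real_vector \<times> 'a) set \<Rightarrow> ('a \<times> 'a) set" where
  "op_comp_neg G = {(x, u) | x u. (- x, u) \<in> G}"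

definition op_scale :: "real \<Rightarrow> ('a::real_vector \<times> 'a) set \<Rightarrow> ('a \<times> 'a) set" where
  "op_scale c G = {(x, c *\<^sub>R u) | x u. (x, u) \<in> G}"

text \<open>Resolvent \<open>J_A = (Id + A)^{-1}\<close>, evaluated as the (unique, for maximally monotone A) point.\<close>
definition resolvent :: "('a::real_vector \<times> 'a) set \<Rightarrow> 'a \<Rightarrow> 'a" where
  "resolvent G x = (THE p. (p, x - p) \<in> G)"

definition Fix :: "('a \<Rightarrow> 'a) \<Rightarrow> 'a set" where
  "Fix T = {x. T x = x}"

definition R_linear_conv :: "(nat \<Rightarrow> 'a::real_normed_vector) \<Rightarrow> 'a \<Rightarrow> bool" where
  "R_linear_conv a l \<longleftrightarrow> (\<exists>C r. 0 \<le> C \<and> 0 < r \<and> r < 1 \<and> (\<forall>n. norm (a n - l) \<le> C * r ^ n))"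

end

theory Submission
  imports Defs
begin

lemma convex_hull_image_weights:
  fixes b :: "'i \<Rightarrow> 'a::real_vector"
  assumes fin: "finite I" and y: "y \<in> convex hull (b ` I)"
  obtains l where "\<forall>i\<in>I. 0 \<le> l i" "sum l I = 1" "(\<Sum>i\<in>I. l i *\<^sub>R b i) = y"
proof -
  obtain u where u: "\<forall>\<beta>\<in>b ` I. 0 \<le> u \<beta>" "sum u (b ` I) = 1" "(\<Sum>\<beta>\<in>b ` I. u \<beta> *\<^sub>R \<beta>) = y"
    using y by (auto simp: convex_hull_finite[OF finite_imageI[OF fin]])
  define s where "s = inv_into I b"
  define l where "l i = (if i \<in> s ` b ` I then u (b i) else 0)" for i
  have s: "s \<beta> \<in> I" "b (s \<beta>) = \<beta>" if "\<beta> \<in> b ` I" for \<beta>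
    using that by (auto simp: s_def inv_into_into f_inv_into_f)
  have inj: "inj_on s (b ` I)"
    by (metis inj_onI s(2))
  have transfer: "(\<Sum>i\<in>I. l i *\<^sub>R h (b i)) = (\<Sum>\<beta>\<in>b ` I. u \<beta> *\<^sub>R h \<beta>)"
    for h :: "'a \<Rightarrow> 'v::real_vector"
  proof -
    have "(\<Sum>i\<in>I. l i *\<^sub>R h (b i)) = (\<Sum>i\<in>s ` b ` I. l i *\<^sub>R h (b i))"
      using fin s(1) by (intro sum.mono_neutral_right) (auto simp: l_def)
    also have "\<dots> = (\<Sum>\<beta>\<in>b ` I. u \<beta> *\<^sub>R h \<beta>)"
      by (simp add: sum.reindex[OF inj] l_def s(2))
    finally show ?thesis .
  qed
  show ?thesis
  proof
    show "\<forall>i\<in>I. 0 \<le> l i" using u(1) by (auto simp: l_def)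
    show "sum l I = 1" using transfer[of "\<lambda>_. 1::real"] u(2) by simp
    show "(\<Sum>i\<in>I. l i *\<^sub>R b i) = y" using transfer[of "\<lambda>\<beta>. \<beta>"] u(3) by simp
  qed
qed

lemma weighted_sum_pairwise_dist_sq:
  fixes v :: "'i \<Rightarrow> 'a::real_inner"
  assumes l: "sum l I = 1"
  shows "(\<Sum>i\<in>I. \<Sum>j\<in>I. l i * l j * (norm (v i - v j))\<^sup>2)
         = 2 * (\<Sum>i\<in>I. l i * (norm (v i - m))\<^sup>2) - 2 * (norm ((\<Sum>i\<in>I. l i *\<^sub>R v i) - m))\<^sup>2"
proof -
  define u where "u i = v i - m" for i
  define U where "U = (\<Sum>j\<in>I. l j *\<^sub>R u j)"
  have U: "(\<Sum>i\<in>I. l i *\<^sub>R v i) - m = U"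
    using l by (simp add: U_def u_def scaleR_diff_right sum_subtractf flip: scaleR_sum_left)
  have "(\<Sum>i\<in>I. \<Sum>j\<in>I. l i * l j * inner (u i) (u j)) = (\<Sum>i\<in>I. l i * inner (u i) U)"
    by (simp add: U_def inner_sum_right sum_distrib_left mult.assoc)
  also have "\<dots> = inner (\<Sum>i\<in>I. l i *\<^sub>R u i) U"
    by (simp add: inner_sum_left)
  finally have cross: "(\<Sum>i\<in>I. \<Sum>j\<in>I. l i * l j * inner (u i) (u j)) = (norm U)\<^sup>2"
    by (simp add: power2_norm_eq_inner flip: U_def)
  have square_i: "(\<Sum>i\<in>I. \<Sum>j\<in>I. l i * l j * (norm (u i))\<^sup>2) = (\<Sum>i\<in>I. l i * (norm (u i))\<^sup>2)"
  proof -
    have "(\<Sum>j\<in>I. l i * l j * c) = l i * c * sum l I" for i c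
      by (simp add: sum_distrib_left mult_ac)
    then show ?thesis using l by simp
  qed
  have square_j: "(\<Sum>i\<in>I. \<Sum>j\<in>I. l i * l j * (norm (u j))\<^sup>2) = (\<Sum>i\<in>I. l i * (norm (u i))\<^sup>2)"
  proof -
    have "(\<Sum>i\<in>I. \<Sum>j\<in>I. l i * l j * (norm (u j))\<^sup>2) = (\<Sum>i\<in>I. l i * (\<Sum>j\<in>I. l j * (norm (u j))\<^sup>2))"
      by (simp add: sum_distrib_left mult.assoc)
    then show ?thesis using l by (simp flip: sum_distrib_right)
  qed
  have expand: "(norm (v i - v j))\<^sup>2 = (norm (u i))\<^sup>2 + (norm (u j))\<^sup>2 - 2 * inner (u i) (u j)" for i j
    by (simp add: u_def power2_norm_eq_inner inner_diff_left inner_diff_right inner_commute)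
  have "(\<Sum>i\<in>I. \<Sum>j\<in>I. l i * l j * (norm (v i - v j))\<^sup>2)
      = (\<Sum>i\<in>I. \<Sum>j\<in>I. l i * l j * (norm (u i))\<^sup>2) + (\<Sum>i\<in>I. \<Sum>j\<in>I. l i * l j * (norm (u j))\<^sup>2)
        - 2 * (\<Sum>i\<in>I. \<Sum>j\<in>I. l i * l j * inner (u i) (u j))"
    unfolding expand by (simp add: algebra_simps sum.distrib sum_subtractf sum_distrib_left)
  then show ?thesis
    unfolding square_i square_j cross U by (simp add: u_def)
qed

lemma continuous_on_Max_image:
  fixes g :: "'i \<Rightarrow> 'a::topological_space \<Rightarrow> real"
  assumes "finite F" "F \<noteq> {}" "\<And>i. i \<in> F \<Longrightarrow> continuous_on K (g i)"
  shows "continuous_on K (\<lambda>c. Max ((\<lambda>i. g i c) ` F))"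
  using assms
proof (induction F rule: finite_ne_induct)
  case (insert i F)
  have "continuous_on K (\<lambda>c. max (g i c) (Max ((\<lambda>i. g i c) ` F)))"
    using insert by (intro continuous_on_max) auto
  then show ?case
    using insert by (simp add: Max_insert)
qed simp

lemma exists_strictly_closer_point:
  fixes b :: "'i \<Rightarrow> 'a::real_inner"
  assumes fin: "finite F" and le: "\<forall>i\<in>F. norm (c - b i) \<le> \<rho> i"
    and notin: "c \<notin> convex hull (b ` {i\<in>F. norm (c - b i) = \<rho> i})"
  shows "\<exists>c'\<in>convex hull (insert c (b ` F)). \<forall>i\<in>F. norm (c' - b i) < \<rho> i"
proof (cases "{i\<in>F. norm (c - b i) = \<rho> i} = {}")
  case True
  then have "\<forall>i\<in>F. norm (c - b i) < \<rho> i"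
    using le by (auto simp: order.order_iff_strict)
  moreover have "c \<in> convex hull (insert c (b ` F))"
    by (simp add: hull_inc)
  ultimately show ?thesis
    by blast
next
  case False
  define I where "I = {i\<in>F. norm (c - b i) = \<rho> i}"
  define H where "H = convex hull (b ` I)"
  have "compact H" "H \<noteq> {}"
    using fin False by (auto simp: H_def I_def intro!: finite_imp_compact_convex_hull)
  moreover have "continuous_on H (\<lambda>q. dist c q)"
    by (intro continuous_intros)
  ultimately obtain p where p: "p \<in> H" "\<And>q. q \<in> H \<Longrightarrow> dist c p \<le> dist c q"
    by (meson continuous_attains_inf)
  define d where "d = p - c"
  have "d \<noteq> 0"
    using p(1) notin by (auto simp: d_def H_def I_def)
  have active: "(norm d)\<^sup>2 \<le> inner (b i - c) d" if "i \<in> I" for i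
  proof -
    have "b i \<in> H"
      using that by (simp add: H_def hull_inc)
    then have "inner (c - p) (b i - p) \<le> 0"
      using any_closest_point_dot[of H p "b i" c] p \<open>compact H\<close>
      by (simp add: H_def compact_imp_closed)
    moreover have "inner (b i - c) d = (norm d)\<^sup>2 - inner (c - p) (b i - p)"
      by (simp add: d_def power2_norm_eq_inner inner_diff_left inner_diff_right inner_commute)
    ultimately show ?thesis by simp
  qed
  have "\<forall>\<^sub>F s in at_right 0. \<forall>i\<in>F. norm (c + s *\<^sub>R d - b i) < \<rho> i"
  proof (intro eventually_ball_finite fin ballI)
    fix i assume "i \<in> F"
    show "\<forall>\<^sub>F s in at_right 0. norm (c + s *\<^sub>R d - b i) < \<rho> i"
    proof (cases "i \<in> I")
      case True
      have "norm (c + s *\<^sub>R d - b i) < \<rho> i" if s: "s \<in> {0<..<2}" for s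
      proof -
        have "(norm (c + s *\<^sub>R d - b i))\<^sup>2
              = (norm (c - b i))\<^sup>2 - 2 * s * inner (b i - c) d + s\<^sup>2 * (norm d)\<^sup>2"
          unfolding power2_norm_eq_inner
          by (simp add: inner_diff_left inner_diff_right inner_add_left inner_add_right
              inner_commute algebra_simps power2_eq_square)
        also have "\<dots> < (norm (c - b i))\<^sup>2"
        proof -
          have "s * (norm d)\<^sup>2 < 2 * (norm d)\<^sup>2"
            using s \<open>d \<noteq> 0\<close> by simp
          then have "s\<^sup>2 * (norm d)\<^sup>2 < 2 * s * (norm d)\<^sup>2"
            using s by (simp add: power2_eq_square mult.assoc)
          also have "\<dots> \<le> 2 * s * inner (b i - c) d"
            using s active[OF True] by simp
          finally show ?thesis by simp
        qed
        finally have "(norm (c + s *\<^sub>R d - b i))\<^sup>2 < (\<rho> i)\<^sup>2"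
          using True by (simp add: I_def)
        moreover have "0 \<le> \<rho> i"
          using True norm_ge_zero[of "c - b i"] by (simp add: I_def)
        ultimately show ?thesis
          by (rule power_less_imp_less_base)
      qed
      moreover have "\<forall>\<^sub>F s in at_right 0. s \<in> {0<..<2::real}"
        by (rule eventually_at_right_real) simp
      ultimately show ?thesis
        by (simp add: eventually_mono)
    next
      case False
      have "((\<lambda>s. norm (c + s *\<^sub>R d - b i)) \<longlongrightarrow> norm (c + 0 *\<^sub>R d - b i)) (at_right 0)"
        by (intro tendsto_intros)
      then have lim: "((\<lambda>s. norm (c + s *\<^sub>R d - b i)) \<longlongrightarrow> norm (c - b i)) (at_right 0)"
        by simp
      have "norm (c - b i) < \<rho> i"
        using False \<open>i \<in> F\<close> le by (auto simp: I_def order.order_iff_strict)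
      then show ?thesis
        by (rule order_tendstoD(2)[OF lim])
    qed
  qed
  moreover have "\<forall>\<^sub>F s in at_right 0. s \<in> {0<..<1::real}"
    by (rule eventually_at_right_real) simp
  ultimately have "\<forall>\<^sub>F s in at_right 0. (\<forall>i\<in>F. norm (c + s *\<^sub>R d - b i) < \<rho> i) \<and> s \<in> {0<..<1}"
    by (rule eventually_conj)
  then have "\<exists>s. (\<forall>i\<in>F. norm (c + s *\<^sub>R d - b i) < \<rho> i) \<and> s \<in> {0<..<1}"
    by (rule eventually_happens'[OF trivial_limit_at_right_real])
  then obtain s where s: "\<forall>i\<in>F. norm (c + s *\<^sub>R d - b i) < \<rho> i" "0 \<le> s" "s \<le> 1"
    by auto
  have "H \<subseteq> convex hull (insert c (b ` F))"
    unfolding H_def by (rule hull_mono) (auto simp: I_def)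
  with p(1) have "p \<in> convex hull (insert c (b ` F))"
    by (rule subsetD[rotated])
  then have "(1 - s) *\<^sub>R c + s *\<^sub>R p \<in> convex hull (insert c (b ` F))"
    by (rule convexD_alt[OF convex_convex_hull hull_inc[OF insertI1] _ s(2,3)])
  moreover have "(1 - s) *\<^sub>R c + s *\<^sub>R p = c + s *\<^sub>R d"
    by (simp add: d_def algebra_simps)
  ultimately have "c + s *\<^sub>R d \<in> convex hull (insert c (b ` F))"
    by simp
  with s(1) show ?thesis
    by blast
qed

lemma kirszbraun_weighted_bound:
  fixes a b :: "'i \<Rightarrow> 'a::real_inner"
  assumes l: "\<forall>i\<in>I. 0 \<le> l i" "sum l I = 1"
    and nonexp: "\<forall>i\<in>I. \<forall>j\<in>I. norm (b i - b j) \<le> norm (a i - a j)"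
    and active: "\<forall>i\<in>I. norm (b i - c) = t * norm (a i - w)"
    and c: "(\<Sum>i\<in>I. l i *\<^sub>R b i) = c"
  shows "t\<^sup>2 * (\<Sum>i\<in>I. l i * (norm (a i - w))\<^sup>2) \<le> (\<Sum>i\<in>I. l i * (norm (a i - w))\<^sup>2)"
proof -
  have "(\<Sum>i\<in>I. \<Sum>j\<in>I. l i * l j * (norm (b i - b j))\<^sup>2)
        = 2 * (\<Sum>i\<in>I. l i * (norm (b i - c))\<^sup>2) - 2 * (norm ((\<Sum>i\<in>I. l i *\<^sub>R b i) - c))\<^sup>2"
    by (rule weighted_sum_pairwise_dist_sq[OF l(2)])
  also have "\<dots> = 2 * (t\<^sup>2 * (\<Sum>i\<in>I. l i * (norm (a i - w))\<^sup>2))"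
    using active c by (simp add: power_mult_distrib sum_distrib_left mult_ac)
  finally have "2 * (t\<^sup>2 * (\<Sum>i\<in>I. l i * (norm (a i - w))\<^sup>2))
        = (\<Sum>i\<in>I. \<Sum>j\<in>I. l i * l j * (norm (b i - b j))\<^sup>2)" ..
  also have "\<dots> \<le> (\<Sum>i\<in>I. \<Sum>j\<in>I. l i * l j * (norm (a i - a j))\<^sup>2)"
    using l(1) nonexp by (intro sum_mono mult_left_mono power_mono) auto
  also have "\<dots> = 2 * (\<Sum>i\<in>I. l i * (norm (a i - w))\<^sup>2) - 2 * (norm ((\<Sum>i\<in>I. l i *\<^sub>R a i) - w))\<^sup>2"
    by (rule weighted_sum_pairwise_dist_sq[OF l(2)])
  also have "\<dots> \<le> 2 * (\<Sum>i\<in>I. l i * (norm (a i - w))\<^sup>2)"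
    by simp
  finally show ?thesis by simp
qed

lemma kirszbraun_finite:
  fixes a b :: "'i \<Rightarrow> 'a::real_inner"
  assumes fin: "finite F" and nonexp: "\<forall>i\<in>F. \<forall>j\<in>F. norm (b i - b j) \<le> norm (a i - a j)"
  shows "\<exists>c. \<forall>i\<in>F. norm (b i - c) \<le> norm (a i - w)"
proof (cases "F = {} \<or> (\<exists>k\<in>F. a k = w)")
  case True
  then obtain k where "F = {} \<or> (k \<in> F \<and> a k = w)"
    by blast
  then have "\<forall>i\<in>F. norm (b i - b k) \<le> norm (a i - w)"
    using nonexp by auto
  then show ?thesis
    by blast
next
  case False
  define r where "r i = norm (a i - w)" for i
  have r: "0 < r i" if "i \<in> F" for i
    using False that by (auto simp: r_def)
  define f where "f c = Max ((\<lambda>i. norm (b i - c) / r i) ` F)" for c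
  define K where "K = convex hull (b ` F)"
  have "continuous_on K (\<lambda>c. norm (b i - c) / r i)" if "i \<in> F" for i
    using r[OF that] by (intro continuous_intros) auto
  then have "continuous_on K f"
    unfolding f_def using fin False by (intro continuous_on_Max_image) auto
  moreover have "compact K" "K \<noteq> {}"
    using fin False by (auto simp: K_def intro!: finite_imp_compact_convex_hull)
  ultimately obtain c where "c \<in> K" and c_min: "\<And>c'. c' \<in> K \<Longrightarrow> f c \<le> f c'"
    by (meson continuous_attains_inf)
  define t where "t = f c"
  have le: "norm (b i - c) \<le> t * r i" if "i \<in> F" for i
  proof -
    have "norm (b i - c) / r i \<le> t"
      unfolding t_def f_def using fin that by (intro Max_ge) auto
    then show ?thesis
      using r[OF that] by (simp add: pos_divide_le_eq)
  qed
  have "t \<le> 1"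
  proof (rule ccontr)
    assume "\<not> t \<le> 1"
    define I where "I = {i\<in>F. norm (c - b i) = t * r i}"
    have hull: "c \<in> convex hull (b ` I)"
    proof (rule ccontr)
      assume "c \<notin> convex hull (b ` I)"
      then obtain c' where c': "c' \<in> convex hull (insert c (b ` F))" "\<forall>i\<in>F. norm (c' - b i) < t * r i"
        using exists_strictly_closer_point[OF fin, of c b "\<lambda>i. t * r i"] le
        by (auto simp: I_def norm_minus_commute)
      have "convex hull (insert c (b ` F)) \<subseteq> K"
        unfolding K_def using \<open>c \<in> K\<close> by (intro convex_hull_subset) (auto simp: K_def hull_inc)
      with c'(1) have "c' \<in> K" by blast
      moreover have "f c' < t"
        using fin False r c'(2) by (auto simp: f_def divide_less_eq norm_minus_commute)
      ultimately show False
        using c_min t_def by fastforce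
    qed
    have "finite I"
      using fin by (simp add: I_def)
    then obtain l where l: "\<forall>i\<in>I. 0 \<le> l i" "sum l I = 1" "(\<Sum>i\<in>I. l i *\<^sub>R b i) = c"
      using hull by (rule convex_hull_image_weights)
    have "t\<^sup>2 * (\<Sum>i\<in>I. l i * (r i)\<^sup>2) \<le> (\<Sum>i\<in>I. l i * (r i)\<^sup>2)"
      unfolding r_def using l nonexp
      by (intro kirszbraun_weighted_bound[where b = b and c = c])
        (auto simp: I_def r_def norm_minus_commute)
    moreover have "0 < (\<Sum>i\<in>I. l i * (r i)\<^sup>2)"
    proof -
      obtain i where "i \<in> I" "0 < l i"
      proof (rule ccontr)
        assume "\<not> thesis"
        with that have "sum l I \<le> 0"
          by (intro sum_nonpos) (meson not_less)
        with l(2) show False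
          by simp
      qed
      moreover have "0 < r i"
        using \<open>i \<in> I\<close> r by (simp add: I_def)
      ultimately show ?thesis
        using \<open>finite I\<close> l(1) by (intro sum_pos2[of I i]) auto
    qed
    ultimately have "t\<^sup>2 \<le> 1"
      by (simp add: mult_le_cancel_right2)
    moreover have "1 < t\<^sup>2"
      using \<open>\<not> t \<le> 1\<close> by (intro one_less_power) auto
    ultimately show False
      by simp
  qed
  have "norm (b i - c) \<le> norm (a i - w)" if "i \<in> F" for i
  proof -
    have "t * r i \<le> r i"
      using mult_right_mono[OF \<open>t \<le> 1\<close>, of "r i"] r[OF that] by simp
    then show ?thesis
      using le[OF that] by (simp add: r_def)
  qed
  then show ?thesis
    by blast
qed

lemma near_minimal_norms_close:
  fixes S :: "'a::real_inner set"
  assumes "convex S" "q1 \<in> S" "q2 \<in> S" "\<And>q. q \<in> S \<Longrightarrow> m \<le> (norm q)\<^sup>2"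
    and "(norm q1)\<^sup>2 \<le> m + e" "(norm q2)\<^sup>2 \<le> m + e"
  shows "(norm (q1 - q2))\<^sup>2 \<le> 4 * e"
proof -
  have "(1/2) *\<^sub>R q1 + (1/2) *\<^sub>R q2 \<in> S"
    using assms(1-3) by (intro convexD) auto
  then have "m \<le> (norm ((1/2) *\<^sub>R (q1 + q2)))\<^sup>2"
    using assms(4) by (simp add: scaleR_add_right)
  also have "\<dots> = (norm (q1 + q2))\<^sup>2 / 4"
    by (simp add: power_divide)
  finally have "4 * m \<le> (norm (q1 + q2))\<^sup>2"
    by simp
  moreover have "(norm (q1 - q2))\<^sup>2 + (norm (q1 + q2))\<^sup>2 = 2 * (norm q1)\<^sup>2 + 2 * (norm q2)\<^sup>2"
    unfolding power2_norm_eq_inner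
    by (simp add: inner_add_left inner_add_right inner_diff_left inner_diff_right inner_commute)
  ultimately show ?thesis
    using assms(5,6) by linarith
qed

lemma cball_family_Inter_nonempty:
  fixes c :: "'i \<Rightarrow> 'a::{real_inner,complete_space}"
  assumes fip: "\<And>F. finite F \<Longrightarrow> F \<subseteq> S \<Longrightarrow> (\<Inter>i\<in>F. cball (c i) (\<rho> i)) \<noteq> {}"
  shows "(\<Inter>i\<in>S. cball (c i) (\<rho> i)) \<noteq> {}"
proof (cases "S = {}")
  case False
  then obtain i0 where "i0 \<in> S" by blast
  define Fin where "Fin = {F. finite F \<and> F \<subseteq> S}"
  define Q where "Q F = (\<Inter>i\<in>F. cball (c i) (\<rho> i))" for F
  define m where "m F = (INF q\<in>Q F. (norm q)\<^sup>2)" for F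
  have Q_ne: "Q F \<noteq> {}" if "F \<in> Fin" for F
    using fip that by (auto simp: Q_def Fin_def)
  have Q_anti: "Q G \<subseteq> Q F" if "F \<subseteq> G" for F G
    using that by (auto simp: Q_def)
  have bdd: "bdd_below ((\<lambda>q. (norm q)\<^sup>2) ` Q F)" for F
    by (auto intro: bdd_belowI[of _ 0])
  have m_le: "m F \<le> (norm q)\<^sup>2" if "q \<in> Q F" for F q
    unfolding m_def using bdd that by (rule cINF_lower)
  have m_approx: "\<exists>q\<in>Q F. (norm q)\<^sup>2 < m F + e" if "F \<in> Fin" "0 < e" for F e
  proof -
    have "(INF q\<in>Q F. (norm q)\<^sup>2) < m F + e"
      using that(2) by (simp add: m_def)
    then show ?thesis
      using Q_ne[OF that(1)] bdd by (simp add: cINF_less_iff)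
  qed
  have m_mono: "m F \<le> m G" if "G \<in> Fin" "F \<subseteq> G" for F G
    unfolding m_def using Q_ne[OF that(1)] bdd Q_anti[OF that(2)] by (intro cINF_superset_mono) auto
  have m_bdd: "m F \<le> (norm (c i0) + \<rho> i0)\<^sup>2" if "F \<in> Fin" for F
  proof -
    have "insert i0 F \<in> Fin"
      using that \<open>i0 \<in> S\<close> by (auto simp: Fin_def)
    then obtain q where q: "q \<in> Q (insert i0 F)"
      using Q_ne by blast
    then have "norm q \<le> norm (c i0) + \<rho> i0"
      using norm_triangle_sub[of q "c i0"] by (auto simp: Q_def dist_norm norm_minus_commute)
    then have "(norm q)\<^sup>2 \<le> (norm (c i0) + \<rho> i0)\<^sup>2"
      by (simp add: power_mono)
    moreover have "m F \<le> (norm q)\<^sup>2"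
      using q Q_anti[of F "insert i0 F"] by (auto intro: m_le)
    ultimately show ?thesis by linarith
  qed
  define d where "d = (SUP F\<in>Fin. m F)"
  have bdd_m: "bdd_above (m ` Fin)"
    using m_bdd by (rule bdd_aboveI2)
  have m_le_d: "m F \<le> d" if "F \<in> Fin" for F
    unfolding d_def using that bdd_m by (rule cSUP_upper)
  define e where "e k = 1 / real (Suc k)" for k
  have e_pos: "0 < e k" for k
    by (simp add: e_def)
  have e_anti: "e k \<le> e N" if "N \<le> k" for k N
    using that by (simp add: e_def frac_le)
  have e_lim: "(\<lambda>k. sqrt (8 * e k)) \<longlonglongrightarrow> 0"
  proof -
    have "(\<lambda>k. sqrt (8 * e k)) \<longlonglongrightarrow> sqrt (8 * 0)"
      using LIMSEQ_inverse_real_of_nat unfolding e_def inverse_eq_divide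
      by (intro tendsto_real_sqrt tendsto_mult_left)
    then show ?thesis
      by simp
  qed
  have "\<exists>F\<in>Fin. d - e k < m F" for k
  proof -
    have "Fin \<noteq> {}"
      by (auto simp: Fin_def)
    moreover have "d - e k < (SUP F\<in>Fin. m F)"
      using e_pos[of k] by (simp add: d_def)
    ultimately show ?thesis
      using bdd_m by (simp add: less_cSUP_iff)
  qed
  then obtain F where F: "\<And>k. F k \<in> Fin" "\<And>k. d - e k < m (F k)"
    by metis
  define G where "G k = (\<Union>j\<le>k. F j)" for k
  have G_Fin: "G k \<in> Fin" for k
    using F(1) by (auto simp: G_def Fin_def)
  have G_m: "d - e k < m (G k)" for k
  proof -
    have "F k \<subseteq> G k"
      by (auto simp: G_def)
    then have "m (F k) \<le> m (G k)"
      by (rule m_mono[OF G_Fin])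
    then show ?thesis
      using F(2)[of k] by linarith
  qed
  have Q_G_anti: "Q (G k) \<subseteq> Q (G N)" if "N \<le> k" for k N
    unfolding G_def using that by (intro Q_anti UN_mono) auto
  have close: "norm (q1 - q2) \<le> sqrt (8 * e N)"
    if q: "q1 \<in> Q (G N)" "q2 \<in> Q (G N)" "(norm q1)\<^sup>2 \<le> d + e N" "(norm q2)\<^sup>2 \<le> d + e N" for q1 q2 N
  proof -
    have "convex (Q (G N))"
      by (simp add: Q_def convex_INT)
    moreover have "d - e N \<le> (norm q)\<^sup>2" if "q \<in> Q (G N)" for q
      using G_m[of N] m_le[OF that] by linarith
    ultimately have "(norm (q1 - q2))\<^sup>2 \<le> 4 * (2 * e N)"
      using q by (intro near_minimal_norms_close[of "Q (G N)" q1 q2 "d - e N"]) auto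
    then show ?thesis
      by (simp add: real_le_rsqrt)
  qed
  have near_min: "\<exists>q\<in>Q H. (norm q)\<^sup>2 \<le> d + e k" if "H \<in> Fin" for H k
    using m_approx[OF that e_pos[of k]] m_le_d[OF that] by force
  then have "\<forall>k. \<exists>q. q \<in> Q (G k) \<and> (norm q)\<^sup>2 \<le> d + e k"
    using G_Fin by blast
  then obtain p where p: "\<And>k. p k \<in> Q (G k)" "\<And>k. (norm (p k))\<^sup>2 \<le> d + e k"
    by metis
  have "Cauchy p"
  proof (rule metric_CauchyI)
    fix \<epsilon> :: real
    assume "0 < \<epsilon>"
    have "\<forall>\<^sub>F k in sequentially. sqrt (8 * e k) < \<epsilon>"
      using order_tendstoD(2)[OF e_lim \<open>0 < \<epsilon>\<close>] .
    then obtain N where N: "sqrt (8 * e N) < \<epsilon>"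
      by (auto simp: eventually_sequentially)
    have "dist (p k) (p l) < \<epsilon>" if kl: "N \<le> k" "N \<le> l" for k l
    proof -
      have "norm (p k - p l) \<le> sqrt (8 * e N)"
      proof (rule close)
        show "p k \<in> Q (G N)" "p l \<in> Q (G N)"
          using p(1) Q_G_anti[OF kl(1)] Q_G_anti[OF kl(2)] by blast+
        show "(norm (p k))\<^sup>2 \<le> d + e N" "(norm (p l))\<^sup>2 \<le> d + e N"
          using p(2)[of k] p(2)[of l] e_anti[OF kl(1)] e_anti[OF kl(2)] by linarith+
      qed
      then show ?thesis
        using N by (simp add: dist_norm)
    qed
    then show "\<exists>M. \<forall>k\<ge>M. \<forall>l\<ge>M. dist (p k) (p l) < \<epsilon>"
      by blast
  qed
  then obtain x where x: "p \<longlonglongrightarrow> x"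
    using Cauchy_convergent_iff convergent_def by blast
  have "x \<in> cball (c i) (\<rho> i)" if "i \<in> S" for i
  proof -
    have "insert i (G k) \<in> Fin" for k
      using G_Fin that by (auto simp: Fin_def)
    then have "\<forall>k. \<exists>q. q \<in> Q (insert i (G k)) \<and> (norm q)\<^sup>2 \<le> d + e k"
      using near_min by blast
    then obtain q where q: "\<And>k. q k \<in> Q (insert i (G k))" "\<And>k. (norm (q k))\<^sup>2 \<le> d + e k"
      by metis
    have "norm (q k - p k) \<le> sqrt (8 * e k)" for k
    proof (rule close)
      show "q k \<in> Q (G k)"
        using q(1)[of k] Q_anti[of "G k" "insert i (G k)"] by blast
    qed (use p q in auto)
    then have "\<forall>\<^sub>F k in sequentially. norm (q k - p k) \<le> sqrt (8 * e k)"
      by simp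
    then have "(\<lambda>k. q k - p k) \<longlonglongrightarrow> 0"
      using e_lim by (rule Lim_null_comparison)
    then have "(\<lambda>k. (q k - p k) + p k) \<longlonglongrightarrow> 0 + x"
      using x by (rule tendsto_add)
    then have "q \<longlonglongrightarrow> x"
      by simp
    moreover have "q k \<in> cball (c i) (\<rho> i)" for k
      using q(1)[of k] by (auto simp: Q_def)
    ultimately show ?thesis
      using closed_sequentially[OF closed_cball] by blast
  qed
  then show ?thesis
    by blast
qed simp

lemma polarization_identity:
  fixes x u :: "'a::real_inner"
  shows "4 * inner x u = (norm (x + u))\<^sup>2 - (norm (x - u))\<^sup>2"
  unfolding power2_norm_eq_inner
  by (simp add: inner_add_left inner_add_right inner_diff_left inner_diff_right inner_commute)

lemma monotone_opI:
  assumes "\<And>x u y v. (x, u) \<in> G \<Longrightarrow> (y, v) \<in> G \<Longrightarrow> 0 \<le> inner (x - y) (u - v)"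
  shows "monotone_op G"
  using assms unfolding monotone_op_def by blast

lemma monotone_opD:
  assumes "monotone_op G" "(x, u) \<in> G" "(y, v) \<in> G"
  shows "0 \<le> inner (x - y) (u - v)"
  using assms unfolding monotone_op_def by blast

lemma max_monotone_mem:
  assumes "max_monotone G" and related: "\<And>y v. (y, v) \<in> G \<Longrightarrow> 0 \<le> inner (x - y) (u - v)"
  shows "(x, u) \<in> G"
proof -
  have mono: "monotone_op G"
    using assms(1) by (simp add: max_monotone_def)
  have swap: "inner (y - x) (v - u) = inner (x - y) (u - v)" for y v
    by (simp add: inner_diff_left inner_diff_right)
  have "monotone_op (insert (x, u) G)"
    by (rule monotone_opI) (auto simp: swap intro: related monotone_opD[OF mono])
  then have "insert (x, u) G = G"
    using assms(1) unfolding max_monotone_def by blast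
  then show ?thesis
    by blast
qed

lemma max_monotoneI:
  assumes mono: "monotone_op G"
    and related: "\<And>x u. (\<And>y v. (y, v) \<in> G \<Longrightarrow> 0 \<le> inner (x - y) (u - v)) \<Longrightarrow> (x, u) \<in> G"
  shows "max_monotone G"
  unfolding max_monotone_def
proof (intro conjI allI impI)
  fix G' assume G': "monotone_op G' \<and> G \<subseteq> G'"
  have "(x, u) \<in> G" if "(x, u) \<in> G'" for x u
    using G' that by (intro related) (auto intro: monotone_opD)
  with G' show "G' = G"
    by auto
qed (fact mono)

theorem minty_surjective:
  fixes G :: "('a::{real_inner,complete_space} \<times> 'a) set"
  assumes "max_monotone G"
  obtains x u where "(x, u) \<in> G" "x + u = w"
proof -
  have mono: "monotone_op G"
    using assms by (simp add: max_monotone_def)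
  define a :: "'a \<times> 'a \<Rightarrow> 'a" where "a = (\<lambda>(y, v). y + v)"
  define b :: "'a \<times> 'a \<Rightarrow> 'a" where "b = (\<lambda>(y, v). y - v)"
  have nonexp: "norm (b i - b j) \<le> norm (a i - a j)" if "i \<in> G" "j \<in> G" for i j
  proof -
    obtain y v y' v' where ij: "i = (y, v)" "j = (y', v')"
      by fastforce
    have "0 \<le> inner (y - y') (v - v')"
      using monotone_opD[OF mono] that ij by blast
    moreover have "4 * inner (y - y') (v - v') = (norm (a i - a j))\<^sup>2 - (norm (b i - b j))\<^sup>2"
      using polarization_identity[of "y - y'" "v - v'"] by (simp add: ij a_def b_def algebra_simps)
    ultimately have "(norm (b i - b j))\<^sup>2 \<le> (norm (a i - a j))\<^sup>2"
      by linarith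
    then show ?thesis
      by (rule power2_le_imp_le) simp
  qed
  have "(\<Inter>i\<in>F. cball (b i) (norm (a i - w))) \<noteq> {}" if F: "finite F" "F \<subseteq> G" for F
  proof -
    have "\<forall>i\<in>F. \<forall>j\<in>F. norm (b i - b j) \<le> norm (a i - a j)"
      using nonexp F(2) by blast
    then obtain c where "\<forall>i\<in>F. norm (b i - c) \<le> norm (a i - w)"
      using kirszbraun_finite[OF F(1)] by blast
    then have "c \<in> (\<Inter>i\<in>F. cball (b i) (norm (a i - w)))"
      by (simp add: dist_norm)
    then show ?thesis
      by blast
  qed
  then obtain c where c: "\<forall>i\<in>G. norm (b i - c) \<le> norm (a i - w)"
    using cball_family_Inter_nonempty[of G b "\<lambda>i. norm (a i - w)"] by (auto simp: dist_norm)
  define x where "x = (1/2) *\<^sub>R (w + c)"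
  define u where "u = (1/2) *\<^sub>R (w - c)"
  have "(w + c) + (w - c) = w + w" "(w + c) - (w - c) = c + c"
    by (simp_all add: algebra_simps)
  then have xu: "x + u = w" "x - u = c"
    unfolding x_def u_def by (simp_all only: scaleR_add_right[symmetric] scaleR_diff_right[symmetric] scaleR_half_double)
  have "(x, u) \<in> G"
  proof (rule max_monotone_mem[OF assms])
    fix y v assume "(y, v) \<in> G"
    have "(x - y) + (u - v) = w - a (y, v)" "(x - y) - (u - v) = c - b (y, v)"
      by (simp_all add: a_def b_def algebra_simps flip: xu)
    then have "4 * inner (x - y) (u - v) = (norm (w - a (y, v)))\<^sup>2 - (norm (c - b (y, v)))\<^sup>2"
      using polarization_identity[of "x - y" "u - v"] by simp
    moreover have "(norm (c - b (y, v)))\<^sup>2 \<le> (norm (w - a (y, v)))\<^sup>2"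
      using bspec[OF c \<open>(y, v) \<in> G\<close>] by (simp add: power_mono norm_minus_commute)
    ultimately show "0 \<le> inner (x - y) (u - v)"
      by linarith
  qed
  then show ?thesis
    using xu(1) by (rule that)
qed

lemma op_scale_mem_iff:
  assumes "c \<noteq> 0"
  shows "(x, u) \<in> op_scale c G \<longleftrightarrow> (x, (1/c) *\<^sub>R u) \<in> G"
proof
  assume "(x, u) \<in> op_scale c G"
  then show "(x, (1/c) *\<^sub>R u) \<in> G"
    using assms by (auto simp: op_scale_def)
next
  assume "(x, (1/c) *\<^sub>R u) \<in> G"
  moreover have "u = c *\<^sub>R ((1/c) *\<^sub>R u)"
    using assms by simp
  ultimately show "(x, u) \<in> op_scale c G"
    unfolding op_scale_def by blast
qed

lemma max_monotone_op_scale: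
  assumes "0 < c" and "max_monotone G"
  shows "max_monotone (op_scale c G)"
proof -
  have mono: "monotone_op G"
    using assms(2) by (simp add: max_monotone_def)
  have c_ne: "c \<noteq> 0"
    using assms(1) by simp
  have scaled: "inner (x - y) ((1/c) *\<^sub>R u - (1/c) *\<^sub>R v) = (1/c) * inner (x - y) (u - v)" for x y u v
    by (simp add: inner_diff_right diff_divide_distrib)
  show ?thesis
  proof (rule max_monotoneI)
    show "monotone_op (op_scale c G)"
    proof (rule monotone_opI)
      fix x u y v
      assume "(x, u) \<in> op_scale c G" "(y, v) \<in> op_scale c G"
      then have "0 \<le> inner (x - y) ((1/c) *\<^sub>R u - (1/c) *\<^sub>R v)"
        using monotone_opD[OF mono] by (simp add: op_scale_mem_iff[OF c_ne])
      then show "0 \<le> inner (x - y) (u - v)"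
        using assms(1) by (simp add: scaled zero_le_divide_iff)
    qed
  next
    fix x u
    assume related: "\<And>y v. (y, v) \<in> op_scale c G \<Longrightarrow> 0 \<le> inner (x - y) (u - v)"
    have "0 \<le> inner (x - y) ((1/c) *\<^sub>R u - v)" if "(y, v) \<in> G" for y v
    proof -
      have "(y, c *\<^sub>R v) \<in> op_scale c G"
        using that c_ne by (simp add: op_scale_mem_iff[OF c_ne])
      then have "0 \<le> inner (x - y) (u - c *\<^sub>R v)"
        by (rule related)
      moreover have "inner (x - y) ((1/c) *\<^sub>R u - v) = (1/c) * inner (x - y) (u - c *\<^sub>R v)"
        using c_ne by (simp add: inner_diff_right right_diff_distrib)
      ultimately show ?thesis
        using assms(1) by simp
    qed
    then have "(x, (1/c) *\<^sub>R u) \<in> G"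
      by (rule max_monotone_mem[OF assms(2)])
    then show "(x, u) \<in> op_scale c G"
      using assms(1) by (simp add: op_scale_mem_iff)
  qed
qed

lemma resolvent_op_scale_eq_iff:
  fixes G :: "('a::{real_inner,complete_space} \<times> 'a) set"
  assumes "max_monotone G" and "0 < c"
  shows "resolvent (op_scale c G) v = p \<longleftrightarrow> (p, (1/c) *\<^sub>R (v - p)) \<in> G"
proof -
  have scaled: "max_monotone (op_scale c G)"
    using assms by (rule max_monotone_op_scale[rotated])
  have mono: "monotone_op (op_scale c G)"
    using scaled by (simp add: max_monotone_def)
  have unique: "p1 = p2" if "(p1, v - p1) \<in> op_scale c G" "(p2, v - p2) \<in> op_scale c G" for p1 p2
  proof -
    have "0 \<le> inner (p1 - p2) ((v - p1) - (v - p2))"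
      by (rule monotone_opD[OF mono that])
    then have "inner (p1 - p2) (p1 - p2) \<le> 0"
      by (simp add: inner_diff_right inner_commute)
    then have "inner (p1 - p2) (p1 - p2) = 0"
      using inner_ge_zero[of "p1 - p2"] by linarith
    then show ?thesis
      by simp
  qed
  obtain x u where xu: "(x, u) \<in> op_scale c G" "x + u = v"
    using minty_surjective[OF scaled] .
  then have ex: "(x, v - x) \<in> op_scale c G"
    by (simp flip: xu(2))
  then have "resolvent (op_scale c G) v = x"
    unfolding resolvent_def using unique by blast
  then show ?thesis
    using ex unique assms(2) by (auto simp: op_scale_mem_iff)
qed

lemma resolvent_graph_eq_iff:
  fixes f :: "'a::{real_inner,complete_space} \<Rightarrow> 'a"
  assumes "max_monotone (graph_of f)" and "0 < c"
  shows "resolvent (op_scale c (graph_of f)) v = p \<longleftrightarrow> v = p + c *\<^sub>R f p"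
proof -
  have "(1/c) *\<^sub>R (v - p) = f p \<longleftrightarrow> v = p + c *\<^sub>R f p"
  proof
    assume h: "(1/c) *\<^sub>R (v - p) = f p"
    have "c *\<^sub>R f p = c *\<^sub>R ((1/c) *\<^sub>R (v - p))"
      by (simp only: h)
    also have "\<dots> = v - p"
      using assms(2) by simp
    finally show "v = p + c *\<^sub>R f p"
      by (simp add: algebra_simps)
  qed (use assms(2) in simp)
  then show ?thesis
    using resolvent_op_scale_eq_iff[OF assms] by (auto simp: graph_of_def)
qed

definition dr_rate :: "real \<Rightarrow> real \<Rightarrow> real" where
  "dr_rate \<kappa> \<beta> = sqrt (1 - 2 * \<kappa> / ((1 + 2 * \<kappa>) * (1 + \<beta>)\<^sup>2))"

lemma dr_rate_bounds:
  assumes "0 < \<kappa>" "0 \<le> \<beta>"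
  shows "0 < dr_rate \<kappa> \<beta>" "dr_rate \<kappa> \<beta> < 1"
proof -
  have "1 \<le> (1 + \<beta>)\<^sup>2"
    using assms(2) by (simp add: one_le_power)
  then have "1 + 2 * \<kappa> \<le> (1 + 2 * \<kappa>) * (1 + \<beta>)\<^sup>2"
    using assms(1) by (simp add: mult_le_cancel_left1)
  then have "2 * \<kappa> < (1 + 2 * \<kappa>) * (1 + \<beta>)\<^sup>2" "0 < (1 + 2 * \<kappa>) * (1 + \<beta>)\<^sup>2"
    using assms(1) by linarith+
  then have "0 < 2 * \<kappa> / ((1 + 2 * \<kappa>) * (1 + \<beta>)\<^sup>2)" "2 * \<kappa> / ((1 + 2 * \<kappa>) * (1 + \<beta>)\<^sup>2) < 1"
    using assms(1) by (simp_all add: divide_less_eq)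
  then show "0 < dr_rate \<kappa> \<beta>" "dr_rate \<kappa> \<beta> < 1"
    by (simp_all add: dr_rate_def)
qed

lemma dr_contraction_estimates:
  fixes p q s :: "'a::real_inner"
  assumes \<kappa>: "0 < \<kappa>" and \<beta>: "0 \<le> \<beta>"
    and lip: "norm q \<le> \<beta> * norm p" and mono: "0 \<le> inner p q"
    and strong: "\<kappa> * (norm s)\<^sup>2 \<le> inner s (p - q - s)"
  shows "norm (q + s) \<le> dr_rate \<kappa> \<beta> * norm (p + q)"
    and "norm p \<le> norm (p + q)"
    and "norm (p - s) \<le> norm (p + q)"
proof -
  define R where "R = (norm (p - s))\<^sup>2 + 2 * \<kappa> * (norm s)\<^sup>2"
  have gap: "R + 2 * inner p q \<le> (norm (p + q))\<^sup>2 - (norm (q + s))\<^sup>2"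
    using strong unfolding R_def power2_norm_eq_inner
    by (simp add: inner_add_left inner_add_right inner_diff_left inner_diff_right inner_commute
        algebra_simps)
  have "(1 + 2 * \<kappa>) * R - 2 * \<kappa> * (norm p)\<^sup>2 = (norm (p - (1 + 2 * \<kappa>) *\<^sub>R s))\<^sup>2"
    unfolding R_def power2_norm_eq_inner
    by (simp add: inner_diff_left inner_diff_right inner_commute algebra_simps)
  then have "2 * \<kappa> * (norm p)\<^sup>2 \<le> (1 + 2 * \<kappa>) * R"
    by (metis diff_ge_0_iff_ge zero_le_power2)
  then have R_lower: "2 * \<kappa> / (1 + 2 * \<kappa>) * (norm p)\<^sup>2 \<le> R"
    using \<kappa> by (simp add: field_simps)
  have "norm (p + q) \<le> (1 + \<beta>) * norm p"
    using norm_triangle_ineq[of p q] lip by (simp add: algebra_simps)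
  then have "(norm (p + q))\<^sup>2 \<le> (1 + \<beta>)\<^sup>2 * (norm p)\<^sup>2"
    by (metis norm_ge_zero power_mono power_mult_distrib)
  then have "(norm (p + q))\<^sup>2 / (1 + \<beta>)\<^sup>2 \<le> (norm p)\<^sup>2"
    using \<beta> by (simp add: divide_le_eq mult.commute)
  then have "2 * \<kappa> / (1 + 2 * \<kappa>) * ((norm (p + q))\<^sup>2 / (1 + \<beta>)\<^sup>2) \<le> R"
    using R_lower \<kappa> by (smt (verit) divide_nonneg_pos mult_left_mono)
  then have "2 * \<kappa> / ((1 + 2 * \<kappa>) * (1 + \<beta>)\<^sup>2) * (norm (p + q))\<^sup>2 \<le> R"
    by (simp add: field_simps)
  then have "(norm (q + s))\<^sup>2 \<le> (dr_rate \<kappa> \<beta>)\<^sup>2 * (norm (p + q))\<^sup>2"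
    using gap mono dr_rate_bounds[OF \<kappa> \<beta>]
    by (simp add: dr_rate_def left_diff_distrib)
  then have "(norm (q + s))\<^sup>2 \<le> (dr_rate \<kappa> \<beta> * norm (p + q))\<^sup>2"
    by (simp add: power_mult_distrib)
  then show "norm (q + s) \<le> dr_rate \<kappa> \<beta> * norm (p + q)"
    by (rule power2_le_imp_le) (use dr_rate_bounds[OF \<kappa> \<beta>] in simp)
  have "(norm (p + q))\<^sup>2 = (norm p)\<^sup>2 + 2 * inner p q + (norm q)\<^sup>2"
    unfolding power2_norm_eq_inner by (simp add: inner_add_left inner_add_right inner_commute)
  then have "(norm p)\<^sup>2 \<le> (norm (p + q))\<^sup>2"
    using mono by simp
  then show "norm p \<le> norm (p + q)"
    by (rule power2_le_imp_le) simp
  have "(norm (p - s))\<^sup>2 \<le> (norm (p + q))\<^sup>2"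
    using gap mono \<kappa> unfolding R_def by (smt (verit) zero_le_power2 mult_nonneg_nonneg)
  then show "norm (p - s) \<le> norm (p + q)"
    by (rule power2_le_imp_le) simp
qed

lemma norm_add_scaleR_rescale:
  fixes p q :: "'a::real_inner"
  assumes "0 < \<gamma>" "0 < \<gamma>'" and mono: "0 \<le> inner p q"
  shows "norm (p + \<gamma>' *\<^sub>R q) \<le> max 1 (\<gamma>' / \<gamma>) * norm (p + \<gamma> *\<^sub>R q)"
proof -
  define M where "M = max 1 (\<gamma>' / \<gamma>)"
  have M: "1 \<le> M" "\<gamma>' \<le> M * \<gamma>"
    using assms(1) by (auto simp: M_def max_def field_simps)
  have expand: "(norm (p + t *\<^sub>R q))\<^sup>2 = (norm p)\<^sup>2 + 2 * t * inner p q + t\<^sup>2 * (norm q)\<^sup>2" for t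
    unfolding power2_norm_eq_inner
    by (simp add: inner_add_left inner_add_right inner_commute power2_eq_square)
  have "M * \<gamma> \<le> M\<^sup>2 * \<gamma>"
    using M(1) assms(1) by (simp add: power2_eq_square)
  then have "\<gamma>' * (2 * inner p q) \<le> (M\<^sup>2 * \<gamma>) * (2 * inner p q)"
    using M(2) mono by (intro mult_right_mono) auto
  then have cross: "2 * \<gamma>' * inner p q \<le> M\<^sup>2 * (2 * \<gamma> * inner p q)"
    by (simp add: mult_ac)
  have "\<gamma>'\<^sup>2 \<le> (M * \<gamma>)\<^sup>2"
    using M(2) assms(2) by (intro power_mono) auto
  then have square: "\<gamma>'\<^sup>2 * (norm q)\<^sup>2 \<le> M\<^sup>2 * (\<gamma>\<^sup>2 * (norm q)\<^sup>2)"
    by (simp add: mult_right_mono power_mult_distrib mult.assoc[symmetric])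
  have const: "(norm p)\<^sup>2 \<le> M\<^sup>2 * (norm p)\<^sup>2"
    using M(1) by (simp add: one_le_power mult_le_cancel_right1)
  have "(norm (p + \<gamma>' *\<^sub>R q))\<^sup>2 \<le> M\<^sup>2 * (norm p)\<^sup>2 + M\<^sup>2 * (2 * \<gamma> * inner p q) + M\<^sup>2 * (\<gamma>\<^sup>2 * (norm q)\<^sup>2)"
    unfolding expand using const cross square by (intro add_mono)
  also have "\<dots> = (M * norm (p + \<gamma> *\<^sub>R q))\<^sup>2"
    unfolding power_mult_distrib expand by (simp add: algebra_simps)
  finally have "(norm (p + \<gamma>' *\<^sub>R q))\<^sup>2 \<le> (M * norm (p + \<gamma> *\<^sub>R q))\<^sup>2" .
  then show ?thesis
    unfolding M_def[symmetric] by (rule power2_le_imp_le) (use M(1) in simp)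
qed

lemma R_linear_convI:
  fixes a :: "nat \<Rightarrow> 'a::real_normed_vector"
  assumes "0 < r" "r < 1" "\<And>n. norm (a n - l) \<le> C * r ^ n"
  shows "R_linear_conv a l"
proof -
  have "0 \<le> C"
    using order_trans[OF norm_ge_zero assms(3)[of 0]] by simp
  then show ?thesis
    unfolding R_linear_conv_def using assms by blast
qed

lemma R_linear_conv_dominated:
  fixes a :: "nat \<Rightarrow> 'a::real_normed_vector" and b :: "nat \<Rightarrow> 'b::real_normed_vector"
  assumes "R_linear_conv b m" "0 \<le> c" "\<And>n. norm (a n - l) \<le> c * norm (b n - m)"
  shows "R_linear_conv a l"
proof -
  obtain C r where r: "0 < r" "r < 1" and C: "\<And>n. norm (b n - m) \<le> C * r ^ n"
    using assms(1) unfolding R_linear_conv_def by blast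
  have "norm (a n - l) \<le> (c * C) * r ^ n" for n
    using assms(3)[of n] mult_left_mono[OF C[of n] assms(2)] by (simp add: mult.assoc)
  with r show ?thesis
    by (rule R_linear_convI)
qed

lemma R_linear_conv_add:
  fixes a b :: "nat \<Rightarrow> 'a::real_normed_vector"
  assumes "R_linear_conv a l" "R_linear_conv b m"
  shows "R_linear_conv (\<lambda>n. a n + b n) (l + m)"
proof -
  obtain C r where r: "0 \<le> C" "0 < r" "r < 1" "\<And>n. norm (a n - l) \<le> C * r ^ n"
    using assms(1) unfolding R_linear_conv_def by blast
  obtain D s where s: "0 \<le> D" "0 < s" "s < 1" "\<And>n. norm (b n - m) \<le> D * s ^ n"
    using assms(2) unfolding R_linear_conv_def by blast
  have "norm (a n + b n - (l + m)) \<le> (C + D) * max r s ^ n" for n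
  proof -
    have "norm (a n + b n - (l + m)) \<le> norm (a n - l) + norm (b n - m)"
      using norm_triangle_ineq[of "a n - l" "b n - m"] by (simp add: algebra_simps)
    also have "\<dots> \<le> C * r ^ n + D * s ^ n"
      by (rule add_mono[OF r(4) s(4)])
    also have "\<dots> \<le> C * max r s ^ n + D * max r s ^ n"
      using r s by (intro add_mono mult_left_mono power_mono) auto
    finally show ?thesis
      by (simp add: distrib_right)
  qed
  then show ?thesis
    using r s by (intro R_linear_convI[of "max r s"]) auto
qed

lemma R_linear_conv_bounded:
  fixes a :: "nat \<Rightarrow> 'a::real_normed_vector"
  assumes "R_linear_conv a l"
  obtains B where "\<And>n. norm (a n - l) \<le> B"
proof -
  obtain C r where r: "0 \<le> C" "0 < r" "r < 1" "\<And>n. norm (a n - l) \<le> C * r ^ n"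
    using assms unfolding R_linear_conv_def by blast
  have "norm (a n - l) \<le> C" for n
    using r(4)[of n] mult_left_mono[OF power_le_one[of r n] r(1)] r(2,3) by simp
  then show ?thesis
    by (rule that)
qed

lemma R_linear_conv_sum_diff_bounded:
  fixes a :: "nat \<Rightarrow> 'a::real_normed_vector"
  assumes "R_linear_conv a l"
  obtains S where "\<And>n. (\<Sum>k<n. norm (a (Suc k) - a k)) \<le> S"
proof -
  obtain C r where r: "0 \<le> C" "0 < r" "r < 1" "\<And>n. norm (a n - l) \<le> C * r ^ n"
    using assms unfolding R_linear_conv_def by blast
  have "norm (a (Suc k) - a k) \<le> 2 * C * r ^ k" for k
  proof -
    have "norm (a (Suc k) - a k) \<le> norm (a (Suc k) - l) + norm (a k - l)"
      using norm_triangle_ineq4[of "a (Suc k) - l" "a k - l"] by simp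
    also have "\<dots> \<le> C * r ^ Suc k + C * r ^ k"
      by (rule add_mono[OF r(4) r(4)])
    also have "C * r ^ Suc k \<le> C * r ^ k"
      using r by (intro mult_left_mono power_decreasing) auto
    finally show ?thesis
      by simp
  qed
  then have "(\<Sum>k<n. norm (a (Suc k) - a k)) \<le> (\<Sum>k<n. 2 * C * r ^ k)" for n
    by (rule sum_mono)
  also have "(\<Sum>k<n. 2 * C * r ^ k) \<le> (\<Sum>k. 2 * C * r ^ k)" for n
    using r by (intro sum_le_suminf summable_mult summable_geometric) auto
  finally show ?thesis
    by (rule that)
qed

lemma perturbed_geometric_bound:
  fixes u e :: "nat \<Rightarrow> real"
  assumes step: "\<And>n. u (Suc n) \<le> exp (e n) * \<theta> * u n"
    and "0 \<le> \<theta>" "0 \<le> u 0" and S: "\<And>n. (\<Sum>k<n. e k) \<le> S"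
  shows "u n \<le> u 0 * exp S * \<theta> ^ n"
proof -
  have "u n \<le> u 0 * exp (\<Sum>k<n. e k) * \<theta> ^ n"
  proof (induction n)
    case (Suc n)
    have "u (Suc n) \<le> exp (e n) * \<theta> * u n"
      by (rule step)
    also have "\<dots> \<le> exp (e n) * \<theta> * (u 0 * exp (\<Sum>k<n. e k) * \<theta> ^ n)"
      using Suc.IH \<open>0 \<le> \<theta>\<close> by (intro mult_left_mono) auto
    also have "\<dots> = u 0 * exp (\<Sum>k<Suc n. e k) * \<theta> ^ Suc n"
      by (simp add: exp_add mult_ac)
    finally show ?case .
  qed simp
  also have "\<dots> \<le> u 0 * exp S * \<theta> ^ n"
    using S assms(2,3) by (intro mult_right_mono mult_left_mono) auto
  finally show ?thesis .
qed

definition dr_operator :: "('a::real_vector \<times> 'a) set \<Rightarrow> ('a \<times> 'a) set \<Rightarrow> real \<Rightarrow> 'a \<Rightarrow> 'a" where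
  "dr_operator A B \<gamma> x =
     x - resolvent (op_scale \<gamma> A) x + resolvent (op_scale \<gamma> B) (2 *\<^sub>R resolvent (op_scale \<gamma> A) x - x)"

lemma zer_op_add_graph_iff: "z \<in> zer (op_add (graph_of f) B) \<longleftrightarrow> (z, - f z) \<in> B"
proof
  assume "z \<in> zer (op_add (graph_of f) B)"
  then obtain v where "f z + v = 0" "(z, v) \<in> B"
    by (auto simp: zer_def op_add_def graph_of_def)
  moreover have "v = - f z"
    using \<open>f z + v = 0\<close> by (simp add: eq_neg_iff_add_eq_0 add.commute)
  ultimately show "(z, - f z) \<in> B"
    by simp
next
  assume "(z, - f z) \<in> B"
  then have "(z, f z + - f z) \<in> op_add (graph_of f) B"
    unfolding op_add_def graph_of_def by blast
  then show "z \<in> zer (op_add (graph_of f) B)"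
    by (simp add: zer_def)
qed

lemma dual_zero_of_primal_zero:
  assumes "(z, - f z) \<in> B"
  shows "f z \<in> zer (op_diff (op_inv (graph_of f)) (op_comp_neg (op_inv B)))"
proof -
  have "(f z, z) \<in> op_inv (graph_of f)" "(f z, z) \<in> op_comp_neg (op_inv B)"
    using assms by (auto simp: op_inv_def op_comp_neg_def graph_of_def)
  then have "(f z, z - z) \<in> op_diff (op_inv (graph_of f)) (op_comp_neg (op_inv B))"
    unfolding op_diff_def by blast
  then show ?thesis
    by (simp add: zer_def)
qed

locale dr_problem =
  fixes A1 :: "'a::{real_inner,complete_space} \<Rightarrow> 'a" and A2 :: "('a \<times> 'a) set"
    and L \<mu> :: real and zs :: 'a
  assumes A1_mono: "max_monotone (graph_of A1)"
    and A1_lip: "L-lipschitz_on UNIV A1"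
    and \<mu>_pos: "0 < \<mu>"
    and A2_mono: "max_monotone A2"
    and A2_strong: "strongly_monotone_op \<mu> A2"
    and zs_zero: "zs \<in> zer (op_add (graph_of A1) A2)"
begin

abbreviation J1 :: "real \<Rightarrow> 'a \<Rightarrow> 'a" where
  "J1 \<gamma> \<equiv> resolvent (op_scale \<gamma> (graph_of A1))"

abbreviation J2 :: "real \<Rightarrow> 'a \<Rightarrow> 'a" where
  "J2 \<gamma> \<equiv> resolvent (op_scale \<gamma> A2)"

abbreviation fixp :: "real \<Rightarrow> 'a" where
  "fixp \<gamma> \<equiv> zs + \<gamma> *\<^sub>R A1 zs"

lemma L_nonneg: "0 \<le> L"
  using A1_lip by (rule lipschitz_on_nonneg)

lemma zs_A2: "(zs, - A1 zs) \<in> A2"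
  using zs_zero by (simp add: zer_op_add_graph_iff)

lemma J1_eq_iff: "0 < \<gamma> \<Longrightarrow> J1 \<gamma> v = p \<longleftrightarrow> v = p + \<gamma> *\<^sub>R A1 p"
  by (rule resolvent_graph_eq_iff[OF A1_mono])

lemma J2_eq_iff: "0 < \<gamma> \<Longrightarrow> J2 \<gamma> v = p \<longleftrightarrow> (p, (1/\<gamma>) *\<^sub>R (v - p)) \<in> A2"
  by (rule resolvent_op_scale_eq_iff[OF A2_mono])

lemma J1_fixp: "0 < \<gamma> \<Longrightarrow> J1 \<gamma> (fixp \<gamma>) = zs"
  by (simp add: J1_eq_iff)

lemma fixp_fixed: "0 < \<gamma> \<Longrightarrow> dr_operator (graph_of A1) A2 \<gamma> (fixp \<gamma>) = fixp \<gamma>"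
proof -
  assume "0 < \<gamma>"
  moreover have "(1/\<gamma>) *\<^sub>R (2 *\<^sub>R zs - fixp \<gamma> - zs) = - A1 zs"
    using \<open>0 < \<gamma>\<close> by (simp add: scaleR_2 algebra_simps)
  ultimately have "J2 \<gamma> (2 *\<^sub>R zs - fixp \<gamma>) = zs"
    using zs_A2 by (simp add: J2_eq_iff)
  then show ?thesis
    using \<open>0 < \<gamma>\<close> by (simp add: dr_operator_def J1_fixp)
qed

lemma dual_solution: "A1 zs \<in> zer (op_diff (op_inv (graph_of A1)) (op_comp_neg (op_inv A2)))"
  using zs_A2 by (rule dual_zero_of_primal_zero)

lemma dr_step:
  assumes \<gamma>: "0 < \<gamma>" and \<kappa>: "0 < \<kappa>" "\<kappa> \<le> \<gamma> * \<mu>" and \<beta>: "\<gamma> * L \<le> \<beta>"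
  shows "norm (dr_operator (graph_of A1) A2 \<gamma> x - fixp \<gamma>) \<le> dr_rate \<kappa> \<beta> * norm (x - fixp \<gamma>)"
    and "norm (J1 \<gamma> x - zs) \<le> norm (x - fixp \<gamma>)"
    and "norm (J2 \<gamma> (2 *\<^sub>R J1 \<gamma> x - x) - zs) \<le> 2 * norm (x - fixp \<gamma>)"
proof -
  define z where "z = J1 \<gamma> x"
  define y where "y = J2 \<gamma> (2 *\<^sub>R z - x)"
  have x: "x = z + \<gamma> *\<^sub>R A1 z"
    using \<gamma> by (simp add: z_def flip: J1_eq_iff)
  have y: "(y, (1/\<gamma>) *\<^sub>R (2 *\<^sub>R z - x - y)) \<in> A2"
    using \<gamma> by (simp add: y_def flip: J2_eq_iff)
  define p where "p = z - zs"
  define q where "q = \<gamma> *\<^sub>R (A1 z - A1 zs)"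
  define s where "s = y - zs"
  have "norm q \<le> \<gamma> * (L * norm p)"
    using \<gamma> lipschitz_on_normD[OF A1_lip, of z zs] by (simp add: q_def p_def mult_left_mono)
  also have "\<dots> \<le> \<beta> * norm p"
    using \<beta> by (simp add: mult.assoc[symmetric] mult_right_mono)
  finally have lip: "norm q \<le> \<beta> * norm p" .
  have mono: "0 \<le> inner p q"
    using \<gamma> monotone_opD[of "graph_of A1" z "A1 z" zs "A1 zs"] A1_mono
    by (simp add: p_def q_def max_monotone_def graph_of_def)
  have "\<mu> * (norm s)\<^sup>2 \<le> inner s ((1/\<gamma>) *\<^sub>R (2 *\<^sub>R z - x - y) - - A1 zs)"
    using A2_strong y zs_A2 unfolding strongly_monotone_op_def s_def by fastforce
  also have "(1/\<gamma>) *\<^sub>R (2 *\<^sub>R z - x - y) - - A1 zs = (1/\<gamma>) *\<^sub>R (p - q - s)"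
    using \<gamma> by (simp add: x p_def q_def s_def scaleR_2 algebra_simps)
  finally have "\<mu> * (norm s)\<^sup>2 \<le> inner s ((1/\<gamma>) *\<^sub>R (p - q - s))" .
  then have "\<mu> * (norm s)\<^sup>2 * \<gamma> \<le> inner s (p - q - s)"
    using \<gamma> by (simp add: pos_le_divide_eq)
  moreover have "\<kappa> * (norm s)\<^sup>2 \<le> \<mu> * (norm s)\<^sup>2 * \<gamma>"
    using mult_right_mono[OF \<kappa>(2) zero_le_power2[of "norm s"]] by (simp add: mult_ac)
  ultimately have strong: "\<kappa> * (norm s)\<^sup>2 \<le> inner s (p - q - s)"
    by linarith
  have \<beta>_nonneg: "0 \<le> \<beta>"
    using order_trans[OF mult_nonneg_nonneg[OF less_imp_le[OF \<gamma>] L_nonneg] \<beta>] .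
  note estimates = dr_contraction_estimates[OF \<kappa>(1) \<beta>_nonneg lip mono strong]
  have "dr_operator (graph_of A1) A2 \<gamma> x = x - z + y"
    by (simp add: dr_operator_def z_def y_def)
  then have pq: "p + q = x - fixp \<gamma>" and qs: "q + s = dr_operator (graph_of A1) A2 \<gamma> x - fixp \<gamma>"
    using x by (simp_all add: p_def q_def s_def algebra_simps)
  show "norm (dr_operator (graph_of A1) A2 \<gamma> x - fixp \<gamma>) \<le> dr_rate \<kappa> \<beta> * norm (x - fixp \<gamma>)"
    using estimates(1) by (simp add: pq qs)
  show "norm (J1 \<gamma> x - zs) \<le> norm (x - fixp \<gamma>)"
    using estimates(2) unfolding pq by (simp add: p_def z_def)
  have "norm (y - zs) \<le> norm p + norm (p - s)"
    using norm_triangle_ineq[of p "s - p"] by (simp add: p_def s_def norm_minus_commute)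
  then show "norm (J2 \<gamma> (2 *\<^sub>R J1 \<gamma> x - x) - zs) \<le> 2 * norm (x - fixp \<gamma>)"
    using estimates(2,3) by (simp add: pq y_def z_def)
qed

lemma fixp_rescale:
  assumes "0 < \<gamma>" "0 < \<gamma>'"
  shows "norm (z + \<gamma>' *\<^sub>R A1 z - fixp \<gamma>') \<le> max 1 (\<gamma>' / \<gamma>) * norm (z + \<gamma> *\<^sub>R A1 z - fixp \<gamma>)"
proof -
  have "0 \<le> inner (z - zs) (A1 z - A1 zs)"
    using monotone_opD[of "graph_of A1" z "A1 z" zs "A1 zs"] A1_mono
    by (simp add: max_monotone_def graph_of_def)
  then show ?thesis
    using norm_add_scaleR_rescale[OF assms, of "z - zs" "A1 z - A1 zs"]
    by (simp add: algebra_simps)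
qed

end

locale adaptive_dr_iteration = dr_problem A1 A2 L \<mu> zs
  for A1 :: "'a::{real_inner,complete_space} \<Rightarrow> 'a" and A2 L \<mu> zs +
  fixes \<gamma>min \<gamma>s :: real and \<gamma> :: "nat \<Rightarrow> real" and x z y w :: "nat \<Rightarrow> 'a"
  assumes \<gamma>min_pos: "0 < \<gamma>min" and \<gamma>_ge: "\<And>n. \<gamma>min \<le> \<gamma> n" and \<gamma>s_pos: "0 < \<gamma>s"
    and \<gamma>_conv: "R_linear_conv \<gamma> \<gamma>s"
    and z0: "z 0 = J1 (\<gamma> 0) (x 0)"
    and y_def: "\<And>n. y n = J2 (\<gamma> n) (2 *\<^sub>R z n - x n)"
    and w_def: "\<And>n. w n = x n - z n + y n"
    and z_Suc: "\<And>n. z (Suc n) = J1 (\<gamma> n) (w n)"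
    and x_Suc: "\<And>n. x (Suc n) = (\<gamma> (Suc n) / \<gamma> n) *\<^sub>R w n + (1 - \<gamma> (Suc n) / \<gamma> n) *\<^sub>R z (Suc n)"
begin

lemma \<gamma>_pos: "0 < \<gamma> n"
  using \<gamma>min_pos \<gamma>_ge[of n] by linarith

lemma w_eq: "w n = z (Suc n) + \<gamma> n *\<^sub>R A1 (z (Suc n))"
  using z_Suc[of n, symmetric] \<gamma>_pos by (simp add: J1_eq_iff)

lemma x_eq: "x n = z n + \<gamma> n *\<^sub>R A1 (z n)"
proof (cases n)
  case 0
  then show ?thesis
    using z0[symmetric] \<gamma>_pos by (simp add: J1_eq_iff)
next
  case (Suc m)
  have "\<gamma> m \<noteq> 0"
    using \<gamma>_pos[of m] by simp
  then show ?thesis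
    using x_Suc[of m] by (simp add: Suc w_eq algebra_simps)
qed

lemma J1_x_eq: "J1 (\<gamma> n) (x n) = z n"
  using x_eq \<gamma>_pos by (simp add: J1_eq_iff)

lemma w_eq_dr_operator: "w n = dr_operator (graph_of A1) A2 (\<gamma> n) (x n)"
  by (simp add: w_def y_def J1_x_eq dr_operator_def)

lemma z_y_bounds:
  "norm (z n - zs) \<le> norm (x n - fixp (\<gamma> n))" "norm (y n - zs) \<le> 2 * norm (x n - fixp (\<gamma> n))"
  using dr_step(2,3)[OF \<gamma>_pos[of n] mult_pos_pos[OF \<gamma>_pos[of n] \<mu>_pos] order_refl order_refl, where x = "x n"]
  by (simp_all add: y_def J1_x_eq)

lemma contraction:
  obtains \<theta> where "0 < \<theta>" "\<theta> < 1" "\<And>n. norm (w n - fixp (\<gamma> n)) \<le> \<theta> * norm (x n - fixp (\<gamma> n))"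
proof -
  obtain B where B: "\<And>n. norm (\<gamma> n - \<gamma>s) \<le> B"
    using R_linear_conv_bounded[OF \<gamma>_conv] by blast
  define \<kappa> where "\<kappa> = \<gamma>min * \<mu>"
  define \<beta> where "\<beta> = (\<gamma>s + B) * L"
  have \<kappa>: "0 < \<kappa>" "\<kappa> \<le> \<gamma> n * \<mu>" for n
    using \<gamma>min_pos \<mu>_pos \<gamma>_ge by (simp_all add: \<kappa>_def mult_right_mono)
  have "\<gamma> n \<le> \<gamma>s + B" for n
    using B[of n] by (simp add: abs_le_iff)
  then have \<beta>: "\<gamma> n * L \<le> \<beta>" for n
    unfolding \<beta>_def using L_nonneg by (rule mult_right_mono)
  have "0 \<le> \<beta>"
    using order_trans[OF mult_nonneg_nonneg[OF less_imp_le[OF \<gamma>_pos[of 0]] L_nonneg] \<beta>[of 0]] .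
  have "norm (w n - fixp (\<gamma> n)) \<le> dr_rate \<kappa> \<beta> * norm (x n - fixp (\<gamma> n))" for n
    using dr_step(1)[OF \<gamma>_pos \<kappa>(1) \<kappa>(2)[of n] \<beta>[of n], of "x n"]
    by (simp add: w_eq_dr_operator)
  with dr_rate_bounds[OF \<kappa>(1) \<open>0 \<le> \<beta>\<close>] show ?thesis
    by (rule that)
qed

lemma rescale_bound:
  "norm (x (Suc n) - fixp (\<gamma> (Suc n))) \<le> exp (\<bar>\<gamma> (Suc n) - \<gamma> n\<bar> / \<gamma>min) * norm (w n - fixp (\<gamma> n))"
proof -
  have "\<gamma> (Suc n) / \<gamma> n \<le> 1 + \<bar>\<gamma> (Suc n) - \<gamma> n\<bar> / \<gamma> n"
    using \<gamma>_pos[of n] by (simp add: field_simps)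
  also have "\<dots> \<le> 1 + \<bar>\<gamma> (Suc n) - \<gamma> n\<bar> / \<gamma>min"
    using \<gamma>min_pos \<gamma>_ge[of n] by (simp add: frac_le)
  finally have "\<gamma> (Suc n) / \<gamma> n \<le> exp (\<bar>\<gamma> (Suc n) - \<gamma> n\<bar> / \<gamma>min)"
    using exp_ge_add_one_self[of "\<bar>\<gamma> (Suc n) - \<gamma> n\<bar> / \<gamma>min"] by linarith
  moreover have "1 \<le> exp (\<bar>\<gamma> (Suc n) - \<gamma> n\<bar> / \<gamma>min)"
    using \<gamma>min_pos by simp
  ultimately have factor: "max 1 (\<gamma> (Suc n) / \<gamma> n) \<le> exp (\<bar>\<gamma> (Suc n) - \<gamma> n\<bar> / \<gamma>min)"
    by simp
  have "norm (x (Suc n) - fixp (\<gamma> (Suc n)))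
      \<le> max 1 (\<gamma> (Suc n) / \<gamma> n) * norm (w n - fixp (\<gamma> n))"
    using fixp_rescale[OF \<gamma>_pos \<gamma>_pos] by (simp add: x_eq[of "Suc n"] w_eq[of n])
  also have "\<dots> \<le> exp (\<bar>\<gamma> (Suc n) - \<gamma> n\<bar> / \<gamma>min) * norm (w n - fixp (\<gamma> n))"
    using factor by (rule mult_right_mono) simp
  finally show ?thesis .
qed

lemma error_R_linear: "R_linear_conv (\<lambda>n. x n - fixp (\<gamma> n)) 0"
proof -
  obtain \<theta> where \<theta>: "0 < \<theta>" "\<theta> < 1" "\<And>n. norm (w n - fixp (\<gamma> n)) \<le> \<theta> * norm (x n - fixp (\<gamma> n))"
    using contraction by blast
  obtain S where S: "\<And>n. (\<Sum>k<n. norm (\<gamma> (Suc k) - \<gamma> k)) \<le> S"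
    using R_linear_conv_sum_diff_bounded[OF \<gamma>_conv] by blast
  define e where "e k = \<bar>\<gamma> (Suc k) - \<gamma> k\<bar> / \<gamma>min" for k
  have "(\<Sum>k<n. e k) \<le> S / \<gamma>min" for n
    using S[of n] \<gamma>min_pos by (simp add: e_def divide_right_mono flip: sum_divide_distrib)
  moreover have "norm (x (Suc n) - fixp (\<gamma> (Suc n))) \<le> exp (e n) * \<theta> * norm (x n - fixp (\<gamma> n))" for n
    using order_trans[OF rescale_bound[of n] mult_left_mono[OF \<theta>(3)[of n] exp_ge_zero]]
    by (simp add: e_def mult.assoc)
  ultimately have "norm (x n - fixp (\<gamma> n)) \<le> norm (x 0 - fixp (\<gamma> 0)) * exp (S / \<gamma>min) * \<theta> ^ n" for n
    using \<theta>(1) by (intro perturbed_geometric_bound) auto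
  with \<theta>(1,2) show ?thesis
    by (intro R_linear_convI) auto
qed

lemma fixp_conv: "R_linear_conv (\<lambda>n. fixp (\<gamma> n)) (fixp \<gamma>s)"
  by (rule R_linear_conv_dominated[OF \<gamma>_conv, where c = "norm (A1 zs)"])
    (simp_all add: mult.commute flip: scaleR_diff_left)

lemma x_conv: "R_linear_conv x (fixp \<gamma>s)"
  using R_linear_conv_add[OF error_R_linear fixp_conv] by simp

lemma w_conv: "R_linear_conv w (fixp \<gamma>s)"
proof -
  obtain \<theta> where "0 < \<theta>" "\<And>n. norm (w n - fixp (\<gamma> n)) \<le> \<theta> * norm (x n - fixp (\<gamma> n))"
    using contraction by blast
  then have "R_linear_conv (\<lambda>n. w n - fixp (\<gamma> n)) 0"
    by (intro R_linear_conv_dominated[OF error_R_linear, where c = \<theta>]) auto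
  then show ?thesis
    using R_linear_conv_add[OF _ fixp_conv] by fastforce
qed

lemma z_conv: "R_linear_conv z zs"
  using z_y_bounds(1) by (intro R_linear_conv_dominated[OF error_R_linear, where c = 1]) auto

lemma y_conv: "R_linear_conv y zs"
  using z_y_bounds(2) by (intro R_linear_conv_dominated[OF error_R_linear, where c = 2]) auto

lemma scaled_residual_conv: "R_linear_conv (\<lambda>n. (1 / \<gamma> n) *\<^sub>R (x n - z n)) (A1 zs)"
proof -
  have "(1 / \<gamma> n) *\<^sub>R (x n - z n) = A1 (z n)" for n
    using \<gamma>_pos[of n] by (simp add: x_eq[of n])
  moreover have "norm (A1 (z n) - A1 zs) \<le> L * norm (z n - zs)" for n
    using lipschitz_on_normD[OF A1_lip] by simp
  ultimately show ?thesis
    using L_nonneg by (intro R_linear_conv_dominated[OF z_conv, where c = L]) auto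
qed

end

theorem corollary4p5:
  fixes A1 :: "'a::{real_inner, complete_space} \<Rightarrow> 'a"
    and A2 :: "('a \<times> 'a) set"
    and \<Gamma> :: "real set" and L \<mu> \<gamma>s :: real and \<gamma> :: "nat \<Rightarrow> real"
    and x z y w :: "nat \<Rightarrow> 'a"
  assumes \<Gamma>_pos: "\<Gamma> \<subseteq> {0<..}" and \<Gamma>_ne: "\<Gamma> \<noteq> {}" and \<Gamma>_closed: "closed \<Gamma>"
    and \<Gamma>_interval: "is_interval \<Gamma>"
    and A1_mono: "max_monotone (graph_of A1)"
    and A1_lip: "L-lipschitz_on UNIV A1"
    and \<mu>_pos: "0 < \<mu>"
    and A2_mono: "max_monotone A2" and A2_strong: "strongly_monotone_op \<mu> A2"
    and P_ne: "zer (op_add (graph_of A1) A2) \<noteq> {}"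
    and \<gamma>_in: "\<And>n. \<gamma> n \<in> \<Gamma>" and \<gamma>s_in: "\<gamma>s \<in> \<Gamma>"
    and \<gamma>_conv: "R_linear_conv \<gamma> \<gamma>s"
    and z0: "z 0 = resolvent (op_scale (\<gamma> 0) (graph_of A1)) (x 0)"
    and y_def: "\<And>n. y n = resolvent (op_scale (\<gamma> n) A2) (2 *\<^sub>R z n - x n)"
    and w_def: "\<And>n. w n = x n - z n + y n"
    and z_def: "\<And>n. z (Suc n) = resolvent (op_scale (\<gamma> n) (graph_of A1)) (w n)"
    and x_def: "\<And>n. x (Suc n) = (\<gamma> (Suc n) / \<gamma> n) *\<^sub>R w n
                                + (1 - \<gamma> (Suc n) / \<gamma> n) *\<^sub>R z (Suc n)"
  shows "\<exists>xl. R_linear_conv x xl \<and> R_linear_conv w xl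
          \<and> xl \<in> Fix (\<lambda>u. u - resolvent (op_scale \<gamma>s (graph_of A1)) u
                 + resolvent (op_scale \<gamma>s A2)
                     (2 *\<^sub>R resolvent (op_scale \<gamma>s (graph_of A1)) u - u))
          \<and> (let zl = resolvent (op_scale \<gamma>s (graph_of A1)) xl;
                 g = (1 / \<gamma>s) *\<^sub>R (xl - zl)
             in R_linear_conv z zl \<and> R_linear_conv y zl
                \<and> zl \<in> zer (op_add (graph_of A1) A2)
                \<and> R_linear_conv (\<lambda>n. (1 / \<gamma> n) *\<^sub>R (x n - z n)) g
                \<and> R_linear_conv (\<lambda>n. (1 / \<gamma> n) *\<^sub>R (w n - y n)) g
                \<and> g \<in> zer (op_diff (op_inv (graph_of A1)) (op_comp_neg (op_inv A2))))"
proof -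
  obtain zs where zs: "zs \<in> zer (op_add (graph_of A1) A2)"
    using P_ne by blast
  have bdd: "bdd_below \<Gamma>"
    by (rule bdd_belowI[of _ 0]) (use \<Gamma>_pos in auto)
  then have "Inf \<Gamma> \<in> \<Gamma>"
    using \<Gamma>_ne \<Gamma>_closed by (intro closed_contains_Inf)
  then have \<gamma>min_pos: "0 < Inf \<Gamma>" and \<gamma>_ge: "Inf \<Gamma> \<le> \<gamma> n" for n
    using \<Gamma>_pos \<gamma>_in bdd by (auto intro: cInf_lower)
  have \<gamma>s_pos: "0 < \<gamma>s"
    using \<Gamma>_pos \<gamma>s_in by auto
  interpret adaptive_dr_iteration A1 A2 L \<mu> zs "Inf \<Gamma>" \<gamma>s \<gamma> x z y w
    by unfold_locales (fact A1_mono A1_lip \<mu>_pos A2_mono A2_strong zs \<gamma>min_pos \<gamma>_ge \<gamma>s_pos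
        \<gamma>_conv z0 y_def w_def z_def x_def)+
  have "fixp \<gamma>s \<in> Fix (\<lambda>u. u - J1 \<gamma>s u + J2 \<gamma>s (2 *\<^sub>R J1 \<gamma>s u - u))"
    using fixp_fixed[OF \<gamma>s_pos] by (simp add: Fix_def dr_operator_def)
  moreover have "(1 / \<gamma>s) *\<^sub>R (fixp \<gamma>s - zs) = A1 zs"
    using \<gamma>s_pos by simp
  moreover have "R_linear_conv (\<lambda>n. (1 / \<gamma> n) *\<^sub>R (w n - y n)) (A1 zs)"
    using scaled_residual_conv by (simp add: w_def)
  ultimately show ?thesis
    using x_conv w_conv z_conv y_conv zs scaled_residual_conv dual_solution \<gamma>s_pos
    by (intro exI[of _ "fixp \<gamma>s"]) (simp add: Let_def J1_fixp[OF \<gamma>s_pos])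
qed

end
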